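(* Let $A=(a_1\ a_2\ a_3)$ be a $1\times 3$ matrix of pairwise distinct positive integers, and let $M$ be a minimal Markov basis for $A$. Then $M$ is distance reducing if and only if $M$ reduces the distance of the circuits of $A$.
   Context: For $z\in\mathbb Z^n$, $z^+,z^-\in\mathbb N^n$ denote the unique vectors with disjoint supports and $z=z^+-z^-$; $\|\cdot\|$ is the $1$-norm. The toric ideal of $A$ is $I_A=\langle x^{u^+}-x^{u^-}: u\in\ker(A)\rangle$, $\ker(A)\subseteq\mathbb Z^n$. A Markov basis is a set $B\subseteq\ker(A)$ such that $\{x^{u^+}-x^{u^-}:u\in B\}$ generates $I_A$; it is minimal if no proper subset is a Markov basis. For nonzero $z\in\ker(A)$ and $u\in\ker(A)$, $u$ reduces the distance of $z$ if there exist $(p,q)\in\{(z^+,z^-),(z^-,z^+)\}$ and $\varepsilon\in\{1,-1\}$ with $p+\varepsilon u\in\mathbb N^n$ and $\|p+\varepsilon u-q\|<\|z\|$. A set $B$ reduces the distance of $Z\subseteq\ker(A)$ if every nonzero $z\in Z$ has its distance reduced by some $u\in B$; $B$ is distance reducing if it reduces the distance of $\ker(A)$. A circuit of $A$ is a nonzero element of $\ker(A)$ whose support has exactly two elements. *)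

theory Defs
  imports "HOL-Library.Poly_Mapping" "HOL-Library.Numeral_Type"
begin

type_synonym zvec = "3 \<Rightarrow> int"
type_synonym 'k poly3 = "(3 \<Rightarrow>\<^sub>0 nat) \<Rightarrow>\<^sub>0 'k"

definition pos_part :: "zvec \<Rightarrow> zvec" where
  "pos_part z = (\<lambda>i. max (z i) 0)"

definition neg_part :: "zvec \<Rightarrow> zvec" where
  "neg_part z = (\<lambda>i. max (- z i) 0)"

definition norm1 :: "zvec \<Rightarrow> int" where
  "norm1 z = (\<Sum>i\<in>UNIV. \<bar>z i\<bar>)"

definition monom3 :: "zvec \<Rightarrow> 'k::field poly3" where
  "monom3 v = Poly_Mapping.single (\<Sum>i\<in>UNIV. Poly_Mapping.single i (nat (v i))) 1"

definition binom3 :: "zvec \<Rightarrow> 'k::field poly3" where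
  "binom3 u = monom3 (pos_part u) - monom3 (neg_part u)"

definition ideal_gen :: "'a::comm_ring_1 set \<Rightarrow> 'a set" where
  "ideal_gen S = {(\<Sum>s\<in>F. r s * s) | F r. finite F \<and> F \<subseteq> S}"

definition kerA :: "zvec \<Rightarrow> zvec set" where
  "kerA a = {u. (\<Sum>i\<in>UNIV. a i * u i) = 0}"

definition toric_ideal :: "'k::field itself \<Rightarrow> zvec \<Rightarrow> 'k poly3 set" where
  "toric_ideal K a = ideal_gen ((binom3 :: zvec \<Rightarrow> 'k poly3) ` kerA a)"

definition markov_basis :: "'k::field itself \<Rightarrow> zvec \<Rightarrow> zvec set \<Rightarrow> bool" where
  "markov_basis K a B \<longleftrightarrow> B \<subseteq> kerA a \<and>
     ideal_gen ((binom3 :: zvec \<Rightarrow> 'k poly3) ` B) = toric_ideal K a"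

definition minimal_markov_basis :: "'k::field itself \<Rightarrow> zvec \<Rightarrow> zvec set \<Rightarrow> bool" where
  "minimal_markov_basis K a B \<longleftrightarrow> markov_basis K a B \<and>
     (\<forall>B'. B' \<subset> B \<longrightarrow> \<not> markov_basis K a B')"

definition reduces_distance :: "zvec \<Rightarrow> zvec \<Rightarrow> bool" where
  "reduces_distance u z \<longleftrightarrow>
     (\<exists>(p, q) \<in> {(pos_part z, neg_part z), (neg_part z, pos_part z)}.
      \<exists>\<epsilon> \<in> {1, -1::int}.
        (\<forall>i. 0 \<le> p i + \<epsilon> * u i) \<and>
        norm1 (\<lambda>i. p i + \<epsilon> * u i - q i) < norm1 z)"

definition reduces_distance_of :: "zvec set \<Rightarrow> zvec set \<Rightarrow> bool" where
  "reduces_distance_of B Z \<longleftrightarrow> (\<forall>z\<in>Z. z \<noteq> (\<lambda>_. 0) \<longrightarrow> (\<exists>u\<in>B. reduces_distance u z))"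

definition distance_reducing :: "zvec \<Rightarrow> zvec set \<Rightarrow> bool" where
  "distance_reducing a B \<longleftrightarrow> reduces_distance_of B (kerA a)"

definition circuits :: "zvec \<Rightarrow> zvec set" where
  "circuits a = {z \<in> kerA a. z \<noteq> (\<lambda>_. 0) \<and> card {i. z i \<noteq> 0} = 2}"

end

theory Submission
  imports Defs HOL.Modules "HOL-Library.Function_Algebras"
begin

text \<open>
  A minimal Markov basis \<open>M\<close> connects every fiber \<open>{x \<ge> 0. A x = b}\<close>, while for \<open>m \<in> M\<close> the
  points \<open>m\<^sup>+\<close> and \<open>m\<^sup>-\<close> are not connected by \<open>M - {m}\<close>. Two points of the fiber of \<open>m\<close>
  sharing a support coordinate are connected without \<open>m\<close>: removing that unit vector leads to a
  lower fiber, where \<open>m\<close> does not fit. So no point of that fiber meets both \<open>supp m\<^sup>+\<close> and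
  \<open>supp m\<^sup>-\<close>, and this rigidity drives the whole argument.

  A nonzero kernel vector with a zero coordinate is a circuit. Otherwise, up to sign and a
  permutation, \<open>z\<^sub>1, z\<^sub>2 > 0 > z\<^sub>3\<close>. If \<open>a\<^sub>3 \<le> z\<^sub>2\<close> (or \<open>a\<^sub>3 \<le> z\<^sub>1\<close>), the circuit
  \<open>(0, a\<^sub>3, -a\<^sub>2)\<close> (or \<open>(a\<^sub>3, 0, -a\<^sub>1)\<close>) is conformal to \<open>z\<close>, and whatever reduces it
  reduces \<open>z\<close>. Otherwise take the first move \<open>v\<close> of a walk from \<open>z\<^sup>-\<close> to \<open>z\<^sup>+\<close>: either \<open>v\<close>
  is conformal to \<open>z\<close> and reduces it, or \<open>v\<close> overshoots \<open>z\<^sub>1\<close> (or \<open>z\<^sub>2\<close>), and then the rigidity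
  bounds every basis move so tightly that a move reducing the circuit also reduces \<open>z\<close>.
\<close>

section \<open>Fibers and moves\<close>

definition degA :: "zvec \<Rightarrow> zvec \<Rightarrow> int" where
  "degA a x = (\<Sum>i\<in>UNIV. a i * x i)"

lemma degA_add: "degA a (x + y) = degA a x + degA a y"
  by (simp add: degA_def distrib_left sum.distrib)

lemma degA_diff: "degA a (x - y) = degA a x - degA a y"
  by (simp add: degA_def right_diff_distrib sum_subtractf)

lemma degA_mono: "0 \<le> a \<Longrightarrow> x \<le> y \<Longrightarrow> degA a x \<le> degA a y"
  unfolding degA_def le_fun_def by (intro sum_mono) (simp add: mult_left_mono)

lemma kerA_iff_degA: "u \<in> kerA a \<longleftrightarrow> degA a u = 0"
  by (simp add: kerA_def degA_def)

lemma uminus_in_kerA: "u \<in> kerA a \<Longrightarrow> - u \<in> kerA a"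
  by (simp add: kerA_def sum_negf)

lemma kerA_nonneg_eq_0:
  assumes "\<And>l. 0 < a l" "u \<in> kerA a" "0 \<le> u"
  shows "u = 0"
proof
  fix l
  have "\<forall>l\<in>UNIV. a l * u l = 0"
    using assms
    by (subst sum_nonneg_eq_0_iff[symmetric]) (auto simp: kerA_def le_fun_def less_imp_le)
  then show "u l = 0 l"
    using assms(1)[of l] by (metis less_irrefl mult_eq_0_iff UNIV_I zero_fun_apply)
qed

lemma pos_part_apply: "pos_part z l = max (z l) 0"
  by (simp add: pos_part_def)

lemma neg_part_apply: "neg_part z l = max (- z l) 0"
  by (simp add: neg_part_def)

lemma pos_part_nonneg [simp]: "0 \<le> pos_part z"
  by (simp add: pos_part_def le_fun_def)

lemma neg_part_nonneg [simp]: "0 \<le> neg_part z"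
  by (simp add: neg_part_def le_fun_def)

lemma pos_part_minus_neg_part: "pos_part z - neg_part z = z"
  by (simp add: pos_part_def neg_part_def fun_eq_iff max_def)

lemma pos_part_uminus [simp]: "pos_part (- z) = neg_part z"
  by (simp add: pos_part_def neg_part_def fun_eq_iff)

lemma neg_part_uminus [simp]: "neg_part (- z) = pos_part z"
  by (simp add: pos_part_def neg_part_def fun_eq_iff)

lemma neg_part_add_self: "neg_part v + v = pos_part v"
  by (simp add: pos_part_def neg_part_def fun_eq_iff max_def)

lemma degA_pos_part_eq_neg_part: "u \<in> kerA a \<Longrightarrow> degA a (pos_part u) = degA a (neg_part u)"
  using degA_diff[of a "pos_part u" "neg_part u"] by (simp add: pos_part_minus_neg_part kerA_iff_degA)

lemma neg_part_le_if_nonneg_add: "0 \<le> x \<Longrightarrow> 0 \<le> x + u \<Longrightarrow> neg_part u \<le> x"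
  unfolding le_fun_def neg_part_def by (simp add: add.commute add_nonneg_eq_0_iff) (smt (verit))

definition moves :: "zvec set \<Rightarrow> (zvec \<times> zvec) set" where
  "moves S = {(x, y). 0 \<le> x \<and> 0 \<le> y \<and> (\<exists>u\<in>S. y = x + u \<or> y = x - u)}"

abbreviation connected_by :: "zvec set \<Rightarrow> zvec \<Rightarrow> zvec \<Rightarrow> bool" where
  "connected_by S x y \<equiv> (x, y) \<in> (moves S)\<^sup>*"

lemma moves_iff: "(x, y) \<in> moves S \<longleftrightarrow> 0 \<le> x \<and> (\<exists>u\<in>S. \<exists>v\<in>{u, - u}. 0 \<le> x + v \<and> y = x + v)"
  unfolding moves_def by auto

lemma connected_by_move:
  "u \<in> S \<Longrightarrow> v \<in> {u, - u} \<Longrightarrow> 0 \<le> x \<Longrightarrow> 0 \<le> x + v \<Longrightarrow> connected_by S x (x + v)"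
  by (rule r_into_rtrancl) (auto simp: moves_iff)

lemma connected_by_sym: "connected_by S x y \<Longrightarrow> connected_by S y x"
proof (induction rule: rtrancl_induct)
  case (step y z)
  then have "(z, y) \<in> moves S" by (auto simp: moves_def)
  then show ?case using step.IH by (rule converse_rtrancl_into_rtrancl)
qed simp

lemma connected_by_mono: "S \<subseteq> T \<Longrightarrow> connected_by S x y \<Longrightarrow> connected_by T x y"
  by (rule rtrancl_mono[THEN subsetD]) (auto simp: moves_def)

lemma connected_by_nonneg: "connected_by S x y \<Longrightarrow> 0 \<le> x \<Longrightarrow> 0 \<le> y"
  by (induction rule: rtrancl_induct) (auto simp: moves_def)

lemma connected_by_shift: "connected_by S x y \<Longrightarrow> 0 \<le> e \<Longrightarrow> connected_by S (x + e) (y + e)"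
proof (induction rule: rtrancl_induct)
  case (step y z)
  then have "(y + e, z + e) \<in> moves S"
    by (force simp: moves_def le_fun_def algebra_simps)
  with step.IH show ?case using step.prems by (meson rtrancl.rtrancl_into_rtrancl)
qed simp

text \<open>Along a walk inside a fiber, every move used fits below the current point, so its
  positive part has degree at most that of the fiber.\<close>
lemma connected_by_low_degree_moves:
  assumes "M \<subseteq> kerA a" "0 \<le> a" "connected_by M x y"
  shows "connected_by {u\<in>M. degA a (pos_part u) \<le> degA a x} x y"
proof -
  have "connected_by {u\<in>M. degA a (pos_part u) \<le> degA a x} x y \<and> degA a y = degA a x"
    using assms(3)
  proof (induction rule: rtrancl_induct)
    case (step y w)
    from step.hyps(2) obtain u v where u: "u \<in> M" "v \<in> {u, - u}" "0 \<le> y" "0 \<le> y + v" "w = y + v"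
      unfolding moves_iff by blast
    have v_ker: "v \<in> kerA a" using u(1,2) assms(1) by (auto intro: uminus_in_kerA)
    have "degA a (pos_part u) = degA a (neg_part v)"
      using u(1,2) assms(1) degA_pos_part_eq_neg_part by auto
    also have "\<dots> \<le> degA a y"
      using u(3,4) assms(2) by (intro degA_mono neg_part_le_if_nonneg_add)
    finally have "(y, w) \<in> moves {u\<in>M. degA a (pos_part u) \<le> degA a x}"
      using u step.IH by (auto simp: moves_iff)
    moreover have "degA a w = degA a y"
      using v_ker u(5) by (simp add: degA_add kerA_iff_degA)
    ultimately show ?case using step.IH by (auto intro: rtrancl_into_rtrancl)
  qed simp
  then show ?thesis ..
qed

section \<open>Markov bases connect the fibers\<close>

definition exponent :: "zvec \<Rightarrow> (3 \<Rightarrow>\<^sub>0 nat)" where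
  "exponent v = (\<Sum>i\<in>UNIV. Poly_Mapping.single i (nat (v i)))"

lemma lookup_exponent [simp]: "Poly_Mapping.lookup (exponent v) i = nat (v i)"
proof -
  have "Poly_Mapping.lookup (exponent v) i = (\<Sum>j\<in>UNIV. nat (v j) when j = i)"
    unfolding exponent_def by (simp only: lookup_sum lookup_single)
  then show ?thesis by (simp add: when_def)
qed

lemma exponent_add: "0 \<le> x \<Longrightarrow> 0 \<le> y \<Longrightarrow> exponent (x + y) = exponent x + exponent y"
  by (rule poly_mapping_eqI) (simp add: lookup_add le_fun_def nat_add_distrib)

lemma inj_on_exponent: "inj_on exponent {x. 0 \<le> x}"
proof (rule inj_onI)
  fix x y :: zvec assume "x \<in> {x. 0 \<le> x}" "y \<in> {x. 0 \<le> x}" "exponent x = exponent y"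
  show "x = y"
  proof
    fix i
    have "nat (x i) = nat (y i)" by (metis \<open>exponent x = exponent y\<close> lookup_exponent)
    moreover have "0 \<le> x i" "0 \<le> y i"
      using \<open>x \<in> {x. 0 \<le> x}\<close> \<open>y \<in> {x. 0 \<le> x}\<close> by (simp_all add: le_fun_def)
    ultimately show "x i = y i" by simp
  qed
qed

lemma exponent_of_nat: "exponent (\<lambda>i. int (Poly_Mapping.lookup n i)) = n"
  by (rule poly_mapping_eqI) simp

lemma monom3_eq_single: "monom3 v = Poly_Mapping.single (exponent v) 1"
  by (simp add: monom3_def exponent_def)

lemma monom3_add: "0 \<le> x \<Longrightarrow> 0 \<le> y \<Longrightarrow> (monom3 (x + y) :: 'k::field poly3) = monom3 x * monom3 y"
  by (simp add: monom3_eq_single exponent_add mult_single)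

interpretation ring_module: module "(*) :: 'a::comm_ring_1 \<Rightarrow> 'a \<Rightarrow> 'a"
  by unfold_locales (simp_all add: algebra_simps)

lemma ideal_gen_eq_span: "ideal_gen S = ring_module.span S"
  by (simp add: ideal_gen_def ring_module.span_explicit)

lemma move_binomial_in_ideal:
  assumes "(x, y) \<in> moves S"
  shows "(monom3 x - monom3 y :: 'k::field poly3) \<in> ideal_gen (binom3 ` S)"
proof -
  from assms obtain u v where u: "u \<in> S" "v \<in> {u, - u}" "0 \<le> x" "0 \<le> x + v" "y = x + v"
    unfolding moves_iff by blast
  define r where "r = x - neg_part v"
  have r: "0 \<le> r" "x = r + neg_part v" "y = r + pos_part v"
    using neg_part_le_if_nonneg_add[OF u(3,4)]
    by (simp_all add: r_def u(5) neg_part_add_self[symmetric])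
  have "(monom3 x - monom3 y :: 'k poly3) = - (monom3 r * binom3 v)"
    by (simp add: r monom3_add binom3_def algebra_simps)
  moreover have "binom3 v = (binom3 u :: 'k poly3) \<or> binom3 v = - (binom3 u :: 'k poly3)"
    using u(2) by (auto simp: binom3_def)
  moreover have "(binom3 u :: 'k poly3) \<in> ring_module.span (binom3 ` S)"
    using u(1) by (simp add: ring_module.span_base)
  ultimately show ?thesis
    unfolding ideal_gen_eq_span by (metis ring_module.span_neg ring_module.span_scale)
qed

lemma connected_by_binomial_in_ideal:
  "connected_by S x y \<Longrightarrow> (monom3 x - monom3 y :: 'k::field poly3) \<in> ideal_gen (binom3 ` S)"
proof (induction rule: rtrancl_induct)
  case (step y z)
  have "(monom3 x - monom3 z :: 'k poly3) = (monom3 x - monom3 y) + (monom3 y - monom3 z)" by simp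
  with step move_binomial_in_ideal[OF step(2)] show ?case
    unfolding ideal_gen_eq_span by (metis ring_module.span_add)
qed (simp add: ideal_gen_eq_span ring_module.span_zero)

definition coeff_mass :: "'a set \<Rightarrow> ('a \<Rightarrow>\<^sub>0 'b::comm_monoid_add) \<Rightarrow> 'b" where
  "coeff_mass E f = (\<Sum>n\<in>Poly_Mapping.keys f \<inter> E. Poly_Mapping.lookup f n)"

lemma coeff_mass_eq_sum:
  assumes "finite T" "Poly_Mapping.keys f \<subseteq> T"
  shows "coeff_mass E f = (\<Sum>n\<in>T \<inter> E. Poly_Mapping.lookup f n)"
  unfolding coeff_mass_def
  by (rule sum.mono_neutral_left) (use assms in \<open>auto simp: in_keys_iff\<close>)

lemma coeff_mass_zero [simp]: "coeff_mass E 0 = 0"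
  by (simp add: coeff_mass_def)

lemma coeff_mass_add: "coeff_mass E (f + g) = coeff_mass E f + coeff_mass E g"
proof -
  let ?T = "Poly_Mapping.keys f \<union> Poly_Mapping.keys g"
  have "coeff_mass E (f + g) = (\<Sum>n\<in>?T \<inter> E. Poly_Mapping.lookup (f + g) n)"
    by (rule coeff_mass_eq_sum) (auto dest: keys_add[THEN subsetD])
  also have "\<dots> = (\<Sum>n\<in>?T \<inter> E. Poly_Mapping.lookup f n) + (\<Sum>n\<in>?T \<inter> E. Poly_Mapping.lookup g n)"
    by (simp add: lookup_add sum.distrib)
  also have "\<dots> = coeff_mass E f + coeff_mass E g"
    using coeff_mass_eq_sum[of ?T f E] coeff_mass_eq_sum[of ?T g E] by simp
  finally show ?thesis .
qed

lemma coeff_mass_diff: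
  "coeff_mass E (f - g) = coeff_mass E f - coeff_mass E (g :: 'a \<Rightarrow>\<^sub>0 'b::ab_group_add)"
  by (metis coeff_mass_add diff_add_cancel eq_diff_eq)

lemma coeff_mass_sum: "coeff_mass E (\<Sum>x\<in>X. f x) = (\<Sum>x\<in>X. coeff_mass E (f x))"
  by (induction X rule: infinite_finite_induct) (simp_all add: coeff_mass_add)

lemma coeff_mass_single: "coeff_mass E (Poly_Mapping.single n c) = (if n \<in> E then c else 0)"
  by (subst coeff_mass_eq_sum[of "{n}"]) auto

lemma sum_single_lookup: "(\<Sum>n\<in>Poly_Mapping.keys f. Poly_Mapping.single n (Poly_Mapping.lookup f n)) = f"
proof (rule poly_mapping_eqI)
  fix k
  have "Poly_Mapping.lookup (\<Sum>n\<in>Poly_Mapping.keys f. Poly_Mapping.single n (Poly_Mapping.lookup f n)) k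
     = (\<Sum>n\<in>Poly_Mapping.keys f. Poly_Mapping.lookup f n when n = k)"
    by (simp only: lookup_sum lookup_single)
  also have "\<dots> = Poly_Mapping.lookup f k"
    by (simp add: when_def sum.delta in_keys_iff)
  finally show "Poly_Mapping.lookup (\<Sum>n\<in>Poly_Mapping.keys f. Poly_Mapping.single n (Poly_Mapping.lookup f n)) k
      = Poly_Mapping.lookup f k" .
qed

lemma coeff_mass_mult_binomial:
  fixes r :: "'a::comm_monoid_add \<Rightarrow>\<^sub>0 'b::comm_ring_1"
  assumes "\<And>n. n + A \<in> E \<longleftrightarrow> n + B \<in> E"
  shows "coeff_mass E (r * (Poly_Mapping.single A 1 - Poly_Mapping.single B 1)) = 0"
proof -
  have "r * (Poly_Mapping.single A 1 - Poly_Mapping.single B 1) =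
    (\<Sum>n\<in>Poly_Mapping.keys r. Poly_Mapping.single (n + A) (Poly_Mapping.lookup r n)
       - Poly_Mapping.single (n + B) (Poly_Mapping.lookup r n))"
    by (subst sum_single_lookup[of r, symmetric])
      (simp add: sum_distrib_right right_diff_distrib mult_single sum_subtractf)
  then show ?thesis
    by (simp add: coeff_mass_sum coeff_mass_diff coeff_mass_single assms)
qed

text \<open>The coefficient mass on the exponents of the \<open>M\<close>-component of \<open>z\<^sup>+\<close> vanishes on the ideal
  generated by \<open>M\<close>, but equals \<open>1\<close> on \<open>x\<^bsup>z\<^sup>+\<^esup> - x\<^bsup>z\<^sup>-\<^esup>\<close> unless \<open>z\<^sup>-\<close> lies in that component.\<close>
lemma binomial_in_ideal_imp_connected_by:
  assumes "(binom3 z :: 'k::field poly3) \<in> ideal_gen (binom3 ` M)"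
  shows "connected_by M (pos_part z) (neg_part z)"
proof (rule ccontr)
  assume not_connected: "\<not> connected_by M (pos_part z) (neg_part z)"
  define C where "C = {y. connected_by M (pos_part z) y}"
  define E where "E = exponent ` C"
  have C_nonneg: "C \<subseteq> {x. 0 \<le> x}"
    unfolding C_def using connected_by_nonneg by auto
  have mem_E: "exponent y \<in> E \<longleftrightarrow> y \<in> C" if "0 \<le> y" for y
    unfolding E_def using that C_nonneg inj_on_exponent by (auto dest: inj_onD)
  have E_closed: "n + exponent (pos_part u) \<in> E \<longleftrightarrow> n + exponent (neg_part u) \<in> E"
    if "u \<in> M" for u n
  proof -
    define x :: zvec where "x = (\<lambda>i. int (Poly_Mapping.lookup n i))"
    have x: "0 \<le> x" "exponent x = n"
      by (simp_all add: x_def le_fun_def exponent_of_nat)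
    have "connected_by M (x + neg_part u) (x + neg_part u + u)"
      by (rule connected_by_move[OF that]) (simp_all add: x add.assoc neg_part_add_self add_nonneg_nonneg)
    then have "x + neg_part u \<in> C \<longleftrightarrow> x + pos_part u \<in> C"
      unfolding C_def by (simp add: add.assoc neg_part_add_self) (meson connected_by_sym rtrancl_trans)
    then show ?thesis
      using x mem_E[of "x + pos_part u"] mem_E[of "x + neg_part u"]
      by (simp add: exponent_add add_nonneg_nonneg)
  qed
  have "coeff_mass E p = 0" if "p \<in> ideal_gen (binom3 ` M)" for p :: "'k poly3"
    using that unfolding ideal_gen_eq_span
  proof (induction rule: ring_module.span_induct_alt)
    case (step c b p)
    then obtain u where "u \<in> M" "b = binom3 u" by blast
    then have "coeff_mass E (c * b) = 0"
      using coeff_mass_mult_binomial[OF E_closed] by (simp add: binom3_def monom3_eq_single)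
    with step.IH show ?case by (simp add: coeff_mass_add)
  qed simp
  moreover have "pos_part z \<in> C" "neg_part z \<notin> C"
    using not_connected by (simp_all add: C_def)
  then have "coeff_mass E (binom3 z :: 'k poly3) = 1"
    by (simp add: binom3_def monom3_eq_single coeff_mass_diff coeff_mass_single mem_E)
  ultimately show False using assms by simp
qed

lemma markov_basis_connects_fibers:
  assumes "markov_basis (TYPE('k::field)) a M" "0 \<le> x" "0 \<le> y" "degA a x = degA a y"
  shows "connected_by M x y"
proof -
  let ?z = "x - y"
  have "?z \<in> kerA a" using assms(4) by (simp add: kerA_iff_degA degA_diff)
  then have "(binom3 ?z :: 'k poly3) \<in> toric_ideal (TYPE('k)) a"
    unfolding toric_ideal_def ideal_gen_eq_span by (simp add: ring_module.span_base)
  with assms(1) have "connected_by M (pos_part ?z) (neg_part ?z)"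
    using binomial_in_ideal_imp_connected_by[where 'k='k] by (simp add: markov_basis_def)
  moreover have "pos_part ?z + inf x y = x" "neg_part ?z + inf x y = y"
    by (simp_all add: fun_eq_iff pos_part_def neg_part_def inf_min max_def min_def)
  moreover have "0 \<le> inf x y" using assms(2,3) by simp
  ultimately show ?thesis by (metis connected_by_shift)
qed

lemma minimal_markov_basis_separates:
  assumes "minimal_markov_basis (TYPE('k::field)) a M" "m \<in> M"
  shows "\<not> connected_by (M - {m}) (pos_part m) (neg_part m)"
proof
  assume "connected_by (M - {m}) (pos_part m) (neg_part m)"
  then have "(binom3 m :: 'k poly3) \<in> ideal_gen (binom3 ` (M - {m}))"
    unfolding binom3_def[of m] by (rule connected_by_binomial_in_ideal)
  then have "binom3 ` M \<subseteq> ring_module.span ((binom3 :: zvec \<Rightarrow> 'k poly3) ` (M - {m}))"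
    unfolding ideal_gen_eq_span by (auto intro: ring_module.span_base)
  moreover have "binom3 ` (M - {m}) \<subseteq> ring_module.span ((binom3 :: zvec \<Rightarrow> 'k poly3) ` M)"
    by (auto intro: ring_module.span_base)
  ultimately have "ideal_gen ((binom3 :: zvec \<Rightarrow> 'k poly3) ` M) = ideal_gen (binom3 ` (M - {m}))"
    unfolding ideal_gen_eq_span ring_module.span_eq by simp
  with assms have "markov_basis (TYPE('k)) a (M - {m})" "M - {m} \<subset> M"
    by (auto simp: minimal_markov_basis_def markov_basis_def)
  with assms(1) show False by (auto simp: minimal_markov_basis_def)
qed

section \<open>Minimal Markov bases\<close>

locale minimal_fiber_basis =
  fixes a :: zvec and M :: "zvec set"
  assumes weights_pos: "\<And>l. 0 < a l"
    and basis_in_kerA: "M \<subseteq> kerA a"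
    and fibers_connected: "\<And>x y. 0 \<le> x \<Longrightarrow> 0 \<le> y \<Longrightarrow> degA a x = degA a y \<Longrightarrow> connected_by M x y"
    and endpoints_separated: "\<And>m. m \<in> M \<Longrightarrow> \<not> connected_by (M - {m}) (pos_part m) (neg_part m)"

lemma minimal_markov_basis_imp_minimal_fiber_basis:
  assumes "\<forall>i. a i > 0" "minimal_markov_basis (TYPE('k::field)) a M"
  shows "minimal_fiber_basis a M"
proof
  have markov: "markov_basis (TYPE('k)) a M"
    using assms(2) by (simp add: minimal_markov_basis_def)
  then show "M \<subseteq> kerA a" by (simp add: markov_basis_def)
  show "\<And>x y. 0 \<le> x \<Longrightarrow> 0 \<le> y \<Longrightarrow> degA a x = degA a y \<Longrightarrow> connected_by M x y"
    using markov by (rule markov_basis_connects_fibers)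
  show "\<And>m. m \<in> M \<Longrightarrow> \<not> connected_by (M - {m}) (pos_part m) (neg_part m)"
    using assms(2) by (rule minimal_markov_basis_separates)
qed (use assms(1) in auto)

context minimal_fiber_basis
begin

lemma in_kerA: "m \<in> M \<Longrightarrow> v \<in> {m, - m} \<Longrightarrow> v \<in> kerA a"
  using basis_in_kerA by (auto intro: uminus_in_kerA)

lemma zero_notin_basis: "0 \<notin> M"
  using endpoints_separated[of 0] by (auto simp: pos_part_def neg_part_def)

lemma move_endpoints_separated:
  assumes "m \<in> M" "v \<in> {m, - m}"
  shows "\<not> connected_by (M - {m}) (neg_part v) (pos_part v)"
  using assms endpoints_separated[of m] connected_by_sym by auto

lemma connected_without_if_common_support:
  assumes "0 \<le> x" "0 \<le> y" "degA a x = degA a y" "degA a y \<le> degA a (pos_part m)"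
    and "0 < x l" "0 < y l"
  shows "connected_by (M - {m}) x y"
proof -
  define e :: zvec where "e = (\<lambda>i. if i = l then 1 else 0)"
  have e: "0 \<le> e" "0 \<le> x - e" "0 \<le> y - e"
    using assms(1,2,5,6) by (auto simp: e_def le_fun_def)
  have "degA a e = a l"
    by (simp add: degA_def e_def if_distrib cong: if_cong)
  then have deg_less: "degA a (x - e) < degA a (pos_part m)"
    using assms(3,4) weights_pos[of l] by (simp add: degA_diff)
  have "degA a (x - e) = degA a (y - e)"
    using assms(3) by (simp add: degA_diff)
  then have "connected_by M (x - e) (y - e)"
    using e by (simp add: fibers_connected)
  then have "connected_by {u\<in>M. degA a (pos_part u) \<le> degA a (x - e)} (x - e) (y - e)"
    using basis_in_kerA weights_pos by (intro connected_by_low_degree_moves) (auto simp: le_fun_def less_imp_le)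
  moreover have "{u\<in>M. degA a (pos_part u) \<le> degA a (x - e)} \<subseteq> M - {m}"
    using deg_less by auto
  ultimately have "connected_by (M - {m}) (x - e) (y - e)"
    by (rule connected_by_mono[rotated])
  from connected_by_shift[OF this e(1)] show ?thesis by simp
qed

lemma fiber_points_connected_without:
  assumes "m \<in> M" "v \<in> {m, - m}" "0 \<le> x" "0 \<le> y"
    and "degA a x = degA a (pos_part v)" "degA a y = degA a (pos_part v)"
    and "0 < x l" "0 < y l"
  shows "connected_by (M - {m}) x y"
proof -
  have "degA a (pos_part v) = degA a (pos_part m)"
    using assms(1,2) in_kerA[of m m] degA_pos_part_eq_neg_part by auto
  then show ?thesis
    using assms by (intro connected_without_if_common_support) simp_all
qed

text \<open>Such an \<open>x\<close> would link \<open>v\<^sup>-\<close> to \<open>v\<^sup>+\<close> without \<open>m\<close>.\<close>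
lemma no_bridge:
  assumes "m \<in> M" "v \<in> {m, - m}" "0 \<le> x" "degA a x = degA a (pos_part v)"
    and "0 < x l" "0 < neg_part v l" "0 < x l'" "0 < pos_part v l'"
  shows False
proof -
  have "degA a (neg_part v) = degA a (pos_part v)"
    using in_kerA[OF assms(1,2)] degA_pos_part_eq_neg_part by simp
  then have "connected_by (M - {m}) (neg_part v) x" "connected_by (M - {m}) x (pos_part v)"
    using assms fiber_points_connected_without[OF assms(1,2)] by simp_all
  then show False
    using move_endpoints_separated[OF assms(1,2)] by (meson rtrancl_trans)
qed

lemma connected_without_other_move:
  assumes "w \<in> M" "w \<noteq> m" "u \<in> {w, - w}"
  shows "connected_by (M - {m}) (neg_part u) (pos_part u)"
  using connected_by_move[of w "M - {m}" u "neg_part u"] assms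
  by (simp add: neg_part_add_self)

lemma exists_move_from:
  assumes "0 \<le> x" "0 \<le> y" "degA a x = degA a y" "x \<noteq> y"
  obtains m v where "m \<in> M" "v \<in> {m, - m}" "0 \<le> x + v"
proof -
  obtain y' where "(x, y') \<in> moves M"
    using fibers_connected[OF assms(1-3)] assms(4) by (metis converse_rtranclE)
  then show ?thesis using that unfolding moves_iff by blast
qed

end

section \<open>Reducing the distance\<close>

lemma norm1_uminus [simp]: "norm1 (- x) = norm1 x"
  by (simp add: norm1_def)

lemma norm1_minus_commute: "norm1 (x - y) = norm1 (y - x)"
  by (metis minus_diff_eq norm1_uminus)

lemma norm1_triangle: "norm1 (x + y) \<le> norm1 x + norm1 y"
  unfolding norm1_def by (simp add: sum.distrib[symmetric] sum_mono abs_triangle_ineq)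

text \<open>A reducing move \<open>v = \<plusminus>u\<close> is applied at \<open>z\<^sup>+\<close> (giving \<open>z + v\<close>) or at \<open>z\<^sup>-\<close> (giving \<open>v - z\<close>).\<close>
lemma reduces_distance_iff:
  "reduces_distance u z \<longleftrightarrow> (\<exists>v\<in>{u, - u}.
     0 \<le> pos_part z + v \<and> norm1 (z + v) < norm1 z \<or> 0 \<le> neg_part z + v \<and> norm1 (z - v) < norm1 z)"
proof -
  have shift: "(\<lambda>i. pos_part z i + e * u i - neg_part z i) = z + (\<lambda>i. e * u i)"
    "(\<lambda>i. neg_part z i + e * u i - pos_part z i) = (\<lambda>i. e * u i) - z" for e
    by (simp_all add: fun_eq_iff pos_part_def neg_part_def max_def)
  have nonneg: "(\<forall>i. 0 \<le> p i + e * u i) \<longleftrightarrow> 0 \<le> p + (\<lambda>i. e * u i)" for p e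
    by (simp add: le_fun_def)
  have signs: "(\<lambda>i. 1 * u i) = u" "(\<lambda>i. - 1 * u i) = - u"
    by (simp_all add: fun_eq_iff)
  show ?thesis
    unfolding reduces_distance_def
    by (simp only: bex_simps(3,5) prod.case shift nonneg signs norm1_minus_commute[of _ z]) blast
qed

lemma reduces_distance_uminus: "reduces_distance u (- z) \<longleftrightarrow> reduces_distance u z"
proof -
  have "- z + v = - (z - v)" "- z - v = - (z + v)" for v
    by simp_all
  then show ?thesis
    unfolding reduces_distance_iff
    by (simp only: pos_part_uminus neg_part_uminus norm1_uminus) blast
qed

definition conformal :: "zvec \<Rightarrow> zvec \<Rightarrow> bool" where
  "conformal c z \<longleftrightarrow> pos_part c \<le> pos_part z \<and> neg_part c \<le> neg_part z"

lemma norm1_conformal: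
  assumes "conformal c z"
  shows "norm1 z = norm1 c + norm1 (z - c)"
proof -
  have "\<bar>z l\<bar> = \<bar>c l\<bar> + \<bar>z l - c l\<bar>" for l
  proof -
    have "max (c l) 0 \<le> max (z l) 0" "max (- c l) 0 \<le> max (- z l) 0"
      using assms by (auto simp: conformal_def le_fun_def pos_part_def neg_part_def)
    then show ?thesis by (auto simp: max_def abs_if split: if_splits)
  qed
  then show ?thesis by (simp add: norm1_def sum.distrib)
qed

lemma reduces_distance_conformal:
  assumes "conformal c z" "reduces_distance u c"
  shows "reduces_distance u z"
proof -
  from assms(2) obtain v where v: "v \<in> {u, - u}"
    "0 \<le> pos_part c + v \<and> norm1 (c + v) < norm1 c \<or> 0 \<le> neg_part c + v \<and> norm1 (c - v) < norm1 c"
    unfolding reduces_distance_iff by blast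
  have "norm1 (z + v) \<le> norm1 (c + v) + norm1 (z - c)" "norm1 (z - v) \<le> norm1 (c - v) + norm1 (z - c)"
    using norm1_triangle[of "c + v" "z - c"] norm1_triangle[of "c - v" "z - c"] by (simp_all add: algebra_simps)
  moreover have "pos_part c + v \<le> pos_part z + v" "neg_part c + v \<le> neg_part z + v"
    using assms(1) by (simp_all add: conformal_def)
  ultimately have "0 \<le> pos_part z + v \<and> norm1 (z + v) < norm1 z \<or> 0 \<le> neg_part z + v \<and> norm1 (z - v) < norm1 z"
    using v(2) norm1_conformal[OF assms(1)] by (auto intro: order_trans)
  then show ?thesis
    using v(1) unfolding reduces_distance_iff by blast
qed

lemma norm1_pos:
  assumes "v \<noteq> 0"
  shows "0 < norm1 v"
proof -
  obtain l where "v l \<noteq> 0" using assms by (auto simp: fun_eq_iff)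
  moreover have "\<bar>v l\<bar> \<le> norm1 v"
    unfolding norm1_def by (rule member_le_sum) simp_all
  ultimately show ?thesis by linarith
qed

lemma reduces_distance_if_conformal:
  assumes "conformal v z" "v \<noteq> 0" "v \<in> {u, - u}"
  shows "reduces_distance u z"
proof -
  have "neg_part v \<le> neg_part z"
    using assms(1) by (simp add: conformal_def)
  then have "pos_part v \<le> neg_part z + v"
    by (simp add: neg_part_add_self[symmetric])
  then have "0 \<le> neg_part z + v"
    using pos_part_nonneg order_trans by blast
  moreover have "norm1 (z - v) < norm1 z"
    using norm1_conformal[OF assms(1)] norm1_pos[OF assms(2)] by simp
  ultimately show ?thesis
    using assms(3) unfolding reduces_distance_iff by blast
qed

section \<open>Three coordinates\<close>

locale three_indices =
  fixes i j k :: 3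
  assumes distinct_indices: "i \<noteq> j" "j \<noteq> k" "i \<noteq> k"
begin

lemma UNIV_eq: "(UNIV :: 3 set) = {i, j, k}"
proof -
  have "card {i, j, k} = CARD(3)" using distinct_indices by simp
  then show ?thesis by (intro card_subset_eq[symmetric]) auto
qed

lemma index_cases: obtains "l = i" | "l = j" | "l = k"
  using UNIV_eq by blast

lemma sum_UNIV_eq: "(\<Sum>l\<in>UNIV. f l) = f i + f j + (f k :: int)"
  unfolding UNIV_eq using distinct_indices by simp

lemma zvec_eqI: "x i = y i \<Longrightarrow> x j = y j \<Longrightarrow> x k = y k \<Longrightarrow> x = (y :: zvec)"
  by (rule ext) (metis index_cases)

lemma zvec_le_iff: "x \<le> y \<longleftrightarrow> x i \<le> y i \<and> x j \<le> y j \<and> x k \<le> (y :: zvec) k"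
  unfolding le_fun_def by (metis index_cases)

lemma nonneg_iff: "0 \<le> x \<longleftrightarrow> 0 \<le> x i \<and> 0 \<le> x j \<and> 0 \<le> (x :: zvec) k"
  by (simp add: zvec_le_iff)

lemma degA_eq: "degA a x = a i * x i + a j * x j + a k * x k"
  unfolding degA_def sum_UNIV_eq ..

lemma norm1_eq: "norm1 x = \<bar>x i\<bar> + \<bar>x j\<bar> + \<bar>x k\<bar>"
  unfolding norm1_def sum_UNIV_eq ..

lemma kerA_iff: "x \<in> kerA a \<longleftrightarrow> a i * x i + a j * x j + a k * x k = 0"
  unfolding kerA_iff_degA degA_eq ..

definition vec :: "int \<Rightarrow> int \<Rightarrow> int \<Rightarrow> zvec" where
  "vec x y w = (\<lambda>l. if l = i then x else if l = j then y else w)"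

lemma vec_apply [simp]: "vec x y w i = x" "vec x y w j = y" "vec x y w k = w"
  using distinct_indices by (simp_all add: vec_def)

lemmas coordinate_simps = nonneg_iff degA_eq norm1_eq pos_part_apply neg_part_apply

end

locale minimal_fiber_basis_3 = minimal_fiber_basis a M + three_indices i j k
  for a :: zvec and M :: "zvec set" and i j k :: 3
begin

lemma weighted_sign_iffs [simp]:
  "0 < a l * t \<longleftrightarrow> 0 < t" "a l * t < 0 \<longleftrightarrow> t < 0"
  "0 \<le> a l * t \<longleftrightarrow> 0 \<le> t" "a l * t \<le> 0 \<longleftrightarrow> t \<le> 0"
  using weights_pos[of l] by (simp_all add: zero_less_mult_iff mult_less_0_iff zero_le_mult_iff mult_le_0_iff)

lemma weighted_less_iff [simp]: "a l * s < a l * t \<longleftrightarrow> s < t" "a l * s \<le> a l * t \<longleftrightarrow> s \<le> t"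
  using weights_pos[of l] by simp_all

lemma kerA_neg_coord: "v \<in> kerA a \<Longrightarrow> v \<noteq> 0 \<Longrightarrow> 0 \<le> v i \<Longrightarrow> 0 \<le> v j \<Longrightarrow> v k < 0"
  using kerA_nonneg_eq_0[OF weights_pos] by (force simp: nonneg_iff)

lemma kerA_pos_coord: "v \<in> kerA a \<Longrightarrow> v k < 0 \<Longrightarrow> 0 < v i \<or> 0 < v j"
  using kerA_nonneg_eq_0[OF weights_pos, of "- v"] uminus_in_kerA[of v a] by (force simp: nonneg_iff)

text \<open>A basis move of sign pattern \<open>(+, +, -)\<close> cannot reach below \<open>z\<^sub>k\<close>: otherwise the point
  \<open>(z\<^sub>i, z\<^sub>j, z\<^sub>k - u\<^sub>k)\<close> would bridge \<open>u\<^sup>-\<close> and \<open>u\<^sup>+\<close>.\<close>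
lemma move_k_ge:
  assumes z: "z \<in> kerA a" "0 < z i" "0 < z j" "z k < 0"
    and u: "w \<in> M" "u \<in> {w, - w}" "0 \<le> u i" "0 \<le> u j" "u k < 0"
  shows "z k \<le> u k"
proof (rule ccontr)
  assume "\<not> z k \<le> u k"
  define X where "X = vec (z i) (z j) (z k - u k)"
  have X: "0 \<le> X" "degA a X = degA a (pos_part u)" "0 < X k"
    using \<open>\<not> z k \<le> u k\<close> z u in_kerA[OF u(1,2)]
    by (auto simp: X_def coordinate_simps kerA_iff max_def algebra_simps)
  have "0 < neg_part u k" using u by (simp add: neg_part_apply)
  moreover have "0 < X l \<and> 0 < pos_part u l" if "l = i \<or> l = j" "0 < u l" for l
    using that z by (auto simp: X_def pos_part_apply)
  ultimately show False
    using kerA_pos_coord[OF in_kerA[OF u(1,2)] u(5)] no_bridge[OF u(1,2) X(1,2,3)] by blast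
qed


text \<open>From here on, \<open>v = \<plusminus>m\<close> is a basis move applicable at \<open>z\<^sup>-\<close> that overshoots \<open>z\<^sub>i\<close>.\<close>
lemma overshooting_move_bounds:
  assumes z: "z \<in> kerA a" "0 < z i" "0 < z j" "z k < 0"
    and v: "m \<in> M" "v \<in> {m, - m}" "z i < v i" "0 \<le> v j" "z k \<le> v k"
  shows "v k < 0" "v j < z j"
proof -
  have "v \<in> kerA a" using in_kerA[OF v(1,2)] .
  moreover from this have "v \<noteq> 0" "0 \<le> v i" using z v by auto
  ultimately show "v k < 0" using v(4) by (rule kerA_neg_coord)
  have "a i * z i < a i * v i" "a k * z k \<le> a k * v k" using z v by simp_all
  moreover have "a i * z i + a j * z j + a k * z k = 0" "a i * v i + a j * v j + a k * v k = 0"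
    using z(1) \<open>v \<in> kerA a\<close> by (simp_all add: kerA_iff)
  ultimately have "a j * v j < a j * z j" by linarith
  then show "v j < z j" by simp
qed

lemma no_overshoot_j_via_chain:
  assumes z: "z \<in> kerA a" "0 < z i" "0 < z j" "z k < 0"
    and v: "m \<in> M" "v \<in> {m, - m}" "z i < v i" "0 \<le> v j" "z k \<le> v k"
    and u: "w \<in> M" "u \<in> {w, - w}" "0 \<le> u i" "z j < u j" "u k < 0"
    and "v k \<le> u k" and exit: "0 < u i \<or> 0 < v j \<or> v k = z k"
  shows False
proof -
  note v_bounds = overshooting_move_bounds[OF z v]
  note kers = in_kerA[OF v(1,2)] in_kerA[OF u(1,2)]
  define Y where "Y = vec (u i) (u j) (u k - v k)"
  have Y: "0 \<le> Y" "degA a Y = degA a (pos_part v)"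
    using z v u v_bounds kers \<open>v k \<le> u k\<close>
    by (auto simp: Y_def coordinate_simps kerA_iff max_def algebra_simps)
  have "degA a (neg_part v) = degA a (pos_part v)"
    using degA_pos_part_eq_neg_part[OF kers(1)] by simp
  note linked = fiber_points_connected_without[OF v(1,2)]
  have start: "connected_by (M - {m}) (neg_part v) Y"
  proof (cases "v k < u k")
    case True
    moreover have "0 < neg_part v k" using v_bounds by (simp add: neg_part_apply)
    ultimately show ?thesis
      using linked[OF neg_part_nonneg Y(1) \<open>degA a (neg_part v) = _\<close> Y(2)] by (simp add: Y_def)
  next
    case False
    then have "neg_part u = neg_part v" "Y = pos_part u"
      using \<open>v k \<le> u k\<close> z v u(3-5) by (auto intro!: zvec_eqI simp: Y_def coordinate_simps max_def)
    moreover have "w \<noteq> m"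
      using u v v_bounds by auto
    ultimately show ?thesis using connected_without_other_move[OF u(1) _ u(2)] by metis
  qed
  have finish: "connected_by (M - {m}) Y (pos_part v)"
  proof -
    consider "0 < u i" | "0 < v j" | "v k = z k" using exit by blast
    then show ?thesis
    proof cases
      case 1
      then show ?thesis using linked[of Y "pos_part v" i] Y z v by (simp add: Y_def pos_part_apply)
    next
      case 2
      then show ?thesis using linked[of Y "pos_part v" j] Y z u by (simp add: Y_def pos_part_apply)
    next
      case 3
      have "degA a (pos_part z) = degA a (pos_part v)"
        using 3 z v kers by (auto simp: coordinate_simps kerA_iff max_def)
      then have "connected_by (M - {m}) Y (pos_part z)" "connected_by (M - {m}) (pos_part z) (pos_part v)"
        using linked[of Y "pos_part z" j] linked[of "pos_part z" "pos_part v" i] Y z u v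
        by (simp_all add: Y_def pos_part_apply)
      then show ?thesis by (rule rtrancl_trans)
    qed
  qed
  show False
    using move_endpoints_separated[OF v(1,2)] rtrancl_trans[OF start finish] by blast
qed

lemma no_overshoot_j_via_bridge:
  assumes z: "z \<in> kerA a" "0 < z i" "0 < z j" "z k < 0"
    and v: "m \<in> M" "v \<in> {m, - m}" "z i < v i" "0 \<le> v j" "z k \<le> v k"
    and u: "w \<in> M" "u \<in> {w, - w}" "0 \<le> u i" "z j < u j" "u k < 0"
    and "z k \<le> u k" and entry: "u k < v k \<and> (0 < u i \<or> 0 < v j) \<or> u i = 0 \<and> v j = 0 \<and> z k < v k"
  shows False
proof -
  note v_bounds = overshooting_move_bounds[OF z v]
  note kers = in_kerA[OF v(1,2)] in_kerA[OF u(1,2)]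
  have "0 < neg_part u k" using u by (simp add: neg_part_apply)
  show False
  proof (cases "u k < v k \<and> (0 < u i \<or> 0 < v j)")
    case True
    then have "u k < v k" and exit: "0 < u i \<or> 0 < v j" by simp_all
    define Y where "Y = vec (v i) (v j) (v k - u k)"
    have Y: "0 \<le> Y" "degA a Y = degA a (pos_part u)" "0 < Y k"
      using z v u v_bounds kers \<open>u k < v k\<close>
      by (auto simp: Y_def coordinate_simps kerA_iff max_def algebra_simps)
    have "0 < Y i \<and> 0 < pos_part u i \<or> 0 < Y j \<and> 0 < pos_part u j"
      using exit z(2,3) v(3) u(4) by (auto simp: Y_def pos_part_apply)
    then show False
      using no_bridge[OF u(1,2) Y(1,2,3) \<open>0 < neg_part u k\<close>] by blast
  next
    case False
    then have "u i = 0" "v j = 0" "z k < v k" using entry by blast+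
    define X where "X = vec (v i - z i) (u j - z j) (v k - z k)"
    have X: "0 \<le> X" "degA a X = degA a (pos_part u)" "0 < X k" "0 < X j"
      using z v u v_bounds kers \<open>u i = 0\<close> \<open>v j = 0\<close> \<open>z k < v k\<close>
      by (auto simp: X_def coordinate_simps kerA_iff max_def algebra_simps)
    have "0 < pos_part u j" using z u by (simp add: pos_part_apply)
    then show False
      using no_bridge[OF u(1,2) X(1,2,3) \<open>0 < neg_part u k\<close> X(4)] by blast
  qed
qed

lemma move_j_le:
  assumes z: "z \<in> kerA a" "0 < z i" "0 < z j" "z k < 0"
    and v: "m \<in> M" "v \<in> {m, - m}" "z i < v i" "0 \<le> v j" "z k \<le> v k"
    and u: "w \<in> M" "u \<in> {w, - w}" "0 \<le> u i" "0 \<le> u j" "u k < 0"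
  shows "u j \<le> z j"
proof (rule ccontr)
  assume "\<not> u j \<le> z j"
  then have u': "w \<in> M" "u \<in> {w, - w}" "0 \<le> u i" "z j < u j" "u k < 0"
    using u by simp_all
  have "z k \<le> u k" using move_k_ge[OF z u] .
  then consider "v k \<le> u k" "0 < u i \<or> 0 < v j \<or> v k = z k"
    | "u k < v k \<and> (0 < u i \<or> 0 < v j) \<or> u i = 0 \<and> v j = 0 \<and> z k < v k"
    using v(5) u(3) v(4) by linarith
  then show False
    using no_overshoot_j_via_chain[OF z v u'] no_overshoot_j_via_bridge[OF z v u' \<open>z k \<le> u k\<close>] by metis
qed


lemma move_j_ge:
  assumes z: "z \<in> kerA a" "0 < z i" "0 < z j" "z k < 0"
    and v: "m \<in> M" "v \<in> {m, - m}" "z i < v i" "0 \<le> v j" "z k \<le> v k"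
    and u: "w \<in> M" "u \<in> {w, - w}" "0 \<le> u i" "u j < 0" "0 \<le> u k"
  shows "- u j \<le> z j"
proof (rule ccontr)
  assume overshoot: "\<not> - u j \<le> z j"
  note u_ker = in_kerA[OF u(1,2)]
  show False
  proof (cases "0 < u i")
    case True
    define X where "X = vec (v i - z i) (v j - z j - u j) (v k - z k)"
    have X: "0 \<le> X" "degA a X = degA a (pos_part u)" "0 < X j" "0 < X i"
      using z v overshooting_move_bounds[OF z v] overshoot True u u_ker in_kerA[OF v(1,2)]
      by (auto simp: X_def coordinate_simps kerA_iff max_def algebra_simps)
    moreover have "0 < neg_part u j" "0 < pos_part u i"
      using True u(4) by (simp_all add: coordinate_simps)
    ultimately show False
      using no_bridge[OF u(1,2)] by blast
  next
    case False
    then have "u i = 0" using u(3) by simp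
    have "a j * u j < 0" using u(4) by simp
    moreover have "a i * u i + a j * u j + a k * u k = 0"
      using u_ker by (simp add: kerA_iff)
    moreover have "a i * u i = 0" using \<open>u i = 0\<close> by simp
    ultimately have "0 < a k * u k" by linarith
    then have "0 < u k" by simp
    have "- u \<in> {w, - w}" using u(2) by auto
    then have "(- u) j \<le> z j"
      by (rule move_j_le[OF z v u(1)]) (use \<open>u i = 0\<close> \<open>0 < u k\<close> u(4) in simp_all)
    with overshoot show False by simp
  qed
qed

lemma circuit_move_at_pos_part:
  assumes z: "z \<in> kerA a" "0 < z i" "0 < z j" "z k < 0"
    and v: "m \<in> M" "v \<in> {m, - m}" "z i < v i" "0 \<le> v j" "z k \<le> v k"
    and c: "c \<in> kerA a" "c i = 0" "z j < c j" "c k < 0"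
    and u: "w \<in> M" "u \<in> {w, - w}" "0 \<le> pos_part c + u" "norm1 (c + u) < norm1 c"
  shows "reduces_distance w z"
proof -
  note u_ker = in_kerA[OF u(1,2)]
  have u_nonneg: "0 \<le> u i" "0 \<le> c j + u j" "0 \<le> u k"
    using u(3) c z by (simp_all add: coordinate_simps)
  have short: "\<bar>u i\<bar> + \<bar>c j + u j\<bar> + \<bar>c k + u k\<bar> < c j - c k"
    using u(4) c z by (simp add: norm1_eq)
  have "u j < 0"
  proof (rule ccontr)
    assume "\<not> u j < 0"
    then have "u = 0"
      using u_nonneg kerA_nonneg_eq_0[OF weights_pos u_ker] by (simp add: nonneg_iff)
    then show False using short c by simp
  qed
  then have "- u j \<le> z j"
    using move_j_ge[OF z v u(1,2)] u_nonneg by simp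
  have "a j * (- u j) \<le> a j * z j" "0 \<le> a i * u i" "0 < a i * z i"
    using \<open>- u j \<le> z j\<close> u_nonneg z(2) by (simp_all only: weighted_less_iff weighted_sign_iffs)
  moreover have "a i * z i + a j * z j + a k * z k = 0" "a i * u i + a j * u j + a k * u k = 0"
    using z(1) u_ker by (simp_all add: kerA_iff)
  ultimately have "a k * u k \<le> a k * (- z k)"
    by (simp only: mult_minus_right)
  then have "u k \<le> - z k" by (simp only: weighted_less_iff)
  have "norm1 (z + u) = (z i + u i) + (z j + u j) - (z k + u k)" "norm1 z = z i + z j - z k"
    using z u_nonneg \<open>- u j \<le> z j\<close> \<open>u k \<le> - z k\<close> by (simp_all add: norm1_eq)
  moreover have "0 \<le> pos_part z + u"
    using z u_nonneg \<open>- u j \<le> z j\<close> by (simp add: coordinate_simps)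
  moreover have "- c k - u k \<le> \<bar>c k + u k\<bar>" by linarith
  ultimately have "0 \<le> pos_part z + u \<and> norm1 (z + u) < norm1 z"
    using short u_nonneg \<open>u j < 0\<close> by linarith
  then show ?thesis
    using u(2) unfolding reduces_distance_iff by blast
qed

lemma circuit_move_at_neg_part:
  assumes z: "z \<in> kerA a" "0 < z i" "0 < z j" "z k < 0"
    and v: "m \<in> M" "v \<in> {m, - m}" "z i < v i" "0 \<le> v j" "z k \<le> v k"
    and c: "c \<in> kerA a" "c i = 0" "z j < c j" "c k < 0"
    and u: "w \<in> M" "u \<in> {w, - w}" "0 \<le> neg_part c + u" "norm1 (c - u) < norm1 c"
  shows "reduces_distance w z"
proof -
  note u_ker = in_kerA[OF u(1,2)]
  have u_nonneg: "0 \<le> u i" "0 \<le> u j" "c k \<le> u k"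
    using u(3) c z by (simp_all add: coordinate_simps)
  have short: "\<bar>u i\<bar> + \<bar>c j - u j\<bar> + \<bar>c k - u k\<bar> < c j - c k"
    using u(4) c z by (simp add: norm1_eq)
  have "u \<noteq> 0" using short c by auto
  then have "u k < 0"
    using kerA_neg_coord[OF u_ker] u_nonneg by simp
  have "z k \<le> u k" "u j \<le> z j"
    using move_k_ge[OF z u(1,2)] move_j_le[OF z v u(1,2)] u_nonneg \<open>u k < 0\<close> by simp_all
  then have "0 \<le> neg_part z + u"
    using u_nonneg by (simp add: coordinate_simps)
  have "norm1 (z - u) = \<bar>z i - u i\<bar> + (z j - u j) + (u k - z k)" "norm1 z = z i + z j - z k"
    using z \<open>z k \<le> u k\<close> \<open>u j \<le> z j\<close> by (simp_all add: norm1_eq)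
  moreover have "\<bar>z i - u i\<bar> < z i + u j - u k"
    using short z(2) u_nonneg \<open>u k < 0\<close> abs_ge_self[of "c j - u j"] abs_ge_minus_self[of "c k - u k"]
    by (simp add: abs_less_iff)
  ultimately have "0 \<le> neg_part z + u \<and> norm1 (z - u) < norm1 z"
    using \<open>0 \<le> neg_part z + u\<close> by linarith
  then show ?thesis
    using u(2) unfolding reduces_distance_iff by blast
qed

lemma reduces_if_circuit_reduced:
  assumes z: "z \<in> kerA a" "0 < z i" "0 < z j" "z k < 0"
    and v: "m \<in> M" "v \<in> {m, - m}" "z i < v i" "0 \<le> v j" "z k \<le> v k"
    and c: "c \<in> kerA a" "c i = 0" "z j < c j" "c k < 0"
    and "w \<in> M" "reduces_distance w c"
  shows "reduces_distance w z"
  using assms(15) circuit_move_at_pos_part[OF z v c assms(14)] circuit_move_at_neg_part[OF z v c assms(14)]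
  unfolding reduces_distance_iff[of w c] by blast


lemma in_circuits_if_coord_zero:
  assumes "z \<in> kerA a" "z \<noteq> 0" "z i = 0"
  shows "z \<in> circuits a"
proof -
  have "z j \<noteq> 0 \<and> z k \<noteq> 0"
  proof (rule ccontr)
    assume "\<not> (z j \<noteq> 0 \<and> z k \<noteq> 0)"
    with assms have "z j = 0" "z k = 0"
      using weights_pos[of j] weights_pos[of k] by (auto simp: kerA_iff)
    with assms(2,3) show False using zvec_eqI[of z 0] by simp
  qed
  then have "{l. z l \<noteq> 0} = {j, k}"
    using assms(3) by auto (metis index_cases)
  then show ?thesis
    using assms(1,2) distinct_indices by (simp add: circuits_def flip: zero_fun_def)
qed

lemma circuit_jk: "vec 0 (a k) (- a j) \<in> circuits a"
proof (rule in_circuits_if_coord_zero)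
  show "vec 0 (a k) (- a j) \<noteq> 0"
    using weights_pos[of k] by (metis less_irrefl vec_apply(2) zero_fun_apply)
qed (simp_all add: kerA_iff)

lemma conformal_circuit_jk:
  assumes "z \<in> kerA a" "0 < z i" "0 < z j" "z k < 0" "a k \<le> z j"
  shows "conformal (vec 0 (a k) (- a j)) z"
proof -
  have "a j * a k \<le> a j * z j" "0 < a i * z i" using assms by simp_all
  moreover have "a i * z i + a j * z j + a k * z k = 0" using assms(1) by (simp add: kerA_iff)
  ultimately have "a k * a j < a k * (- z k)" by (simp only: mult.commute[of "a j"] mult_minus_right)
  then have "a j < - z k" by (simp only: weighted_less_iff)
  then show ?thesis
    using assms weights_pos[of j] weights_pos[of k]
    by (simp add: conformal_def zvec_le_iff pos_part_apply neg_part_apply)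
qed

lemma reduces_via_first_move:
  assumes circ: "reduces_distance_of M (circuits a)"
    and z: "z \<in> kerA a" "0 < z i" "0 < z j" "z k < 0" and small: "z i < a k" "z j < a k"
  shows "\<exists>w\<in>M. reduces_distance w z"
proof -
  interpret jik: minimal_fiber_basis_3 a M j i k
    using distinct_indices by unfold_locales auto
  have c: "vec 0 (a k) (- a j) \<in> kerA a" "jik.vec 0 (a k) (- a i) \<in> kerA a"
    using circuit_jk jik.circuit_jk by (simp_all add: circuits_def)
  obtain wc where wc: "wc \<in> M" "reduces_distance wc (vec 0 (a k) (- a j))"
    using circ circuit_jk by (auto simp: reduces_distance_of_def circuits_def)
  obtain wc' where wc': "wc' \<in> M" "reduces_distance wc' (jik.vec 0 (a k) (- a i))"
    using circ jik.circuit_jk by (auto simp: reduces_distance_of_def circuits_def)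
  have "neg_part z i \<noteq> pos_part z i"
    using z(2) by (simp add: pos_part_apply neg_part_apply)
  then obtain m v where v: "m \<in> M" "v \<in> {m, - m}" "0 \<le> neg_part z + v"
    using exists_move_from[OF neg_part_nonneg pos_part_nonneg] degA_pos_part_eq_neg_part[OF z(1)]
    by metis
  have v_coords: "0 \<le> v i" "0 \<le> v j" "z k \<le> v k"
    using v(3) z by (simp_all add: coordinate_simps)
  consider "z i < v i" | "z j < v j" | "v i \<le> z i" "v j \<le> z j" by linarith
  then show ?thesis
  proof cases
    case 1
    then show ?thesis
      using reduces_if_circuit_reduced[OF z v(1,2) 1 v_coords(2,3) c(1) _ _ _ wc] small
        weights_pos[of j] wc(1) by auto
  next
    case 2
    then show ?thesis
      using jik.reduces_if_circuit_reduced[OF z(1,3,2,4) v(1,2) 2 v_coords(1,3) c(2) _ _ _ wc'] small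
        weights_pos[of i] wc'(1) by auto
  next
    case 3
    have "v \<noteq> 0" using v(1,2) zero_notin_basis by auto
    then have "v k < 0" using kerA_neg_coord[OF in_kerA[OF v(1,2)]] v_coords by simp
    with 3 v_coords have "conformal v z"
      by (simp add: conformal_def zvec_le_iff pos_part_apply neg_part_apply)
    then show ?thesis
      using reduces_distance_if_conformal[OF _ \<open>v \<noteq> 0\<close> v(2)] v(1) by blast
  qed
qed

lemma reduces_if_two_pos_one_neg:
  assumes circ: "reduces_distance_of M (circuits a)"
    and z: "z \<in> kerA a" "0 < z i" "0 < z j" "z k < 0"
  shows "\<exists>w\<in>M. reduces_distance w z"
proof -
  interpret jik: minimal_fiber_basis_3 a M j i k
    using distinct_indices by unfold_locales auto
  have circuit_reduced: "\<exists>w\<in>M. reduces_distance w c" if "c \<in> circuits a" for c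
    using circ that by (auto simp: reduces_distance_of_def circuits_def)
  consider "a k \<le> z j" | "a k \<le> z i" | "z i < a k" "z j < a k" by linarith
  then show ?thesis
  proof cases
    case 1
    then show ?thesis
      using circuit_reduced[OF circuit_jk] reduces_distance_conformal[OF conformal_circuit_jk[OF z 1]]
      by blast
  next
    case 2
    then show ?thesis
      using circuit_reduced[OF jik.circuit_jk]
        reduces_distance_conformal[OF jik.conformal_circuit_jk[OF z(1,3,2,4) 2]]
      by blast
  next
    case 3
    then show ?thesis by (rule reduces_via_first_move[OF circ z])
  qed
qed

lemma reduces_every_nonzero:
  assumes circ: "reduces_distance_of M (circuits a)" and z: "z \<in> kerA a" "z \<noteq> 0"
  shows "\<exists>w\<in>M. reduces_distance w z"
proof -
  interpret jki: minimal_fiber_basis_3 a M j k i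
    using distinct_indices by unfold_locales auto
  interpret kij: minimal_fiber_basis_3 a M k i j
    using distinct_indices by unfold_locales auto
  show ?thesis
  proof (cases "z i = 0 \<or> z j = 0 \<or> z k = 0")
    case True
    then have "z \<in> circuits a"
      using in_circuits_if_coord_zero jki.in_circuits_if_coord_zero kij.in_circuits_if_coord_zero z
      by blast
    then show ?thesis
      using circ z(2) by (simp add: reduces_distance_of_def flip: zero_fun_def)
  next
    case False
    let ?two_pos_one_neg = "\<lambda>y. 0 < y i \<and> 0 < y j \<and> y k < 0 \<or> 0 < y j \<and> 0 < y k \<and> y i < 0
      \<or> 0 < y k \<and> 0 < y i \<and> y j < 0"
    have "\<not> (0 \<le> z i \<and> 0 \<le> z j \<and> 0 \<le> z k)" "\<not> (0 \<le> - z i \<and> 0 \<le> - z j \<and> 0 \<le> - z k)"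
      using kerA_nonneg_eq_0[OF weights_pos z(1)] kerA_nonneg_eq_0[OF weights_pos uminus_in_kerA[OF z(1)]] z(2)
      by (auto simp: nonneg_iff)
    with False have "?two_pos_one_neg z \<or> ?two_pos_one_neg (- z)"
      by (cases "0 < z i"; cases "0 < z j"; cases "0 < z k") auto
    moreover have "\<exists>w\<in>M. reduces_distance w y" if "y \<in> kerA a" "?two_pos_one_neg y" for y
      using that reduces_if_two_pos_one_neg[OF circ] jki.reduces_if_two_pos_one_neg[OF circ]
        kij.reduces_if_two_pos_one_neg[OF circ]
      by blast
    ultimately show ?thesis
      using z(1) uminus_in_kerA[OF z(1)] reduces_distance_uminus by blast
  qed
qed

end

theorem theorem3p1:
  fixes a :: zvec and M :: "zvec set"
  assumes pos: "\<forall>i. a i > 0"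
    and distinct: "inj a"
    and minimal: "minimal_markov_basis (TYPE('k::field)) a M"
  shows "distance_reducing a M \<longleftrightarrow> reduces_distance_of M (circuits a)"
proof
  assume "distance_reducing a M"
  then show "reduces_distance_of M (circuits a)"
    unfolding distance_reducing_def reduces_distance_of_def circuits_def by auto
next
  assume "reduces_distance_of M (circuits a)"
  interpret minimal_fiber_basis a M
    by (rule minimal_markov_basis_imp_minimal_fiber_basis[OF pos minimal])
  interpret minimal_fiber_basis_3 a M 0 1 2
    by unfold_locales simp_all
  show "distance_reducing a M"
    unfolding distance_reducing_def reduces_distance_of_def
    using reduces_every_nonzero[OF \<open>reduces_distance_of M (circuits a)\<close>] by (simp flip: zero_fun_def)
qed

end
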